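(* Let $\alpha>0$ and $v>-\frac{7}{8}$, and let $$w_{\alpha,v}(z)=z+\sum_{n=1}^{\infty}a_n z^{n+1},\qquad a_n=\frac{(-1)^n(2n+\alpha)}{\alpha\, 4^n\, n!\,(v+1)_n},$$ for $z\in\mathcal{U}=\{z\in\mathbb{C}:|z|<1\}$, and for a nonnegative integer $m$ let $(w_{\alpha,v})_m(z)=z+\sum_{n=1}^{m}a_n z^{n+1}$ be its $m$-th partial sum. If $$8(\alpha-4)v+5\alpha-32\ge 0,$$ then for all $z\in\mathcal{U}$, $$\operatorname{Re}\left\{\frac{w_{\alpha,v}(z)}{(w_{\alpha,v})_m(z)}\right\}\ge \frac{8(\alpha-4)v+5\alpha-32}{(8v+7)\alpha}$$ and $$\operatorname{Re}\left\{\frac{(w_{\alpha,v})_m(z)}{w_{\alpha,v}(z)}\right\}\ge \frac{(8v+7)\alpha}{(8v+7)\alpha+32v+2\alpha+32}.$$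
   Context: $(\mu)_n=\mu(\mu+1)\cdots(\mu+n-1)$ is the Pochhammer symbol. The function $w_{\alpha,v}$ is the normalized Dini function $\frac{2^v}{\alpha}\Gamma(v+1)z^{1-v/2}\big((\alpha-v)J_v(\sqrt z)+\sqrt z J_v'(\sqrt z)\big)$, with $J_v$ the Bessel function of the first kind. The quotients are understood as analytic functions on $\mathcal{U}$ (taking the value $1$ at $z=0$). *)

theory Defs
  imports "HOL-Analysis.Analysis"
begin

definition dini_coeff :: "real \<Rightarrow> real \<Rightarrow> nat \<Rightarrow> real" where
  "dini_coeff \<alpha> v n =
     (-1) ^ n * (2 * real n + \<alpha>) / (\<alpha> * 4 ^ n * fact n * pochhammer (v + 1) n)"

definition dini_w :: "real \<Rightarrow> real \<Rightarrow> complex \<Rightarrow> complex" where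
  "dini_w \<alpha> v z = z + (\<Sum>n. complex_of_real (dini_coeff \<alpha> v (Suc n)) * z ^ (Suc n + 1))"

definition dini_w_partial :: "real \<Rightarrow> real \<Rightarrow> nat \<Rightarrow> complex \<Rightarrow> complex" where
  "dini_w_partial \<alpha> v m z = z + (\<Sum>n=1..m. complex_of_real (dini_coeff \<alpha> v n) * z ^ (n + 1))"

text \<open>Quotients understood as analytic functions on the unit disc, value 1 at z = 0.\<close>
definition analytic_quot :: "(complex \<Rightarrow> complex) \<Rightarrow> (complex \<Rightarrow> complex) \<Rightarrow> complex \<Rightarrow> complex" where
  "analytic_quot f g z = (if z = 0 then 1 else f z / g z)"

end

theory Submission
  imports Defs
begin

text \<open>
  Put \<open>b_k = a_{k+1} z^{k+1}\<close>, so that \<open>w(z) = z (1 + \<Sum>_k b_k)\<close> and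
  \<open>(w)_m(z) = z (1 + \<Sum>_{k<m} b_k)\<close>. Since \<open>n! \<ge> 2^{n-1}\<close> and \<open>(v+1)_n \<ge> (v+1)^n\<close>, the
  coefficients \<open>|a_n|\<close> are dominated by a geometric sequence of ratio \<open>1/(8(v+1)) < 1\<close>
  with sum \<open>\<delta> = (32v + 2\<alpha> + 32)/((8v+7)\<alpha>)\<close>, and the hypothesis says exactly \<open>\<delta> \<le> 1\<close>.
  Whenever \<open>\<Sum>_k |b_k| < \<delta> \<le> 1\<close>, the tail over the head,
  \<open>u = (\<Sum>_{k\<ge>m} b_k)/(1 + \<Sum>_{k<m} b_k)\<close>, satisfies \<open>|u| < \<delta>\<close>; the two quotients are
  \<open>1 + u\<close> and \<open>1/(1 + u)\<close>, with real parts at least \<open>1 - \<delta>\<close> and \<open>1/(1 + \<delta>)\<close>.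
\<close>

lemma power_le_pochhammer:
  fixes x :: "'a :: linordered_semidom"
  assumes "0 \<le> x"
  shows "x ^ n \<le> pochhammer x n"
proof (induction n)
  case (Suc n)
  have "x ^ Suc n = x ^ n * x" by (simp add: mult.commute)
  also have "\<dots> \<le> pochhammer x n * (x + of_nat n)"
    using Suc assms order_trans[OF zero_le_power Suc] by (intro mult_mono) auto
  finally show ?case by (simp add: pochhammer_Suc)
qed simp

lemma two_power_le_fact_Suc: "(2::real) ^ n \<le> fact (Suc n)"
proof (induction n)
  case (Suc n)
  have "(2::real) ^ Suc n = 2 * 2 ^ n" by simp
  also have "\<dots> \<le> real (Suc (Suc n)) * fact (Suc n)"
    using Suc by (intro mult_mono) auto
  finally show ?case by simp
qed simp

lemma Re_inverse_one_plus_ge: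
  fixes u :: complex
  assumes "norm u < 1"
  shows "1 / (1 + norm u) \<le> Re (1 / (1 + u))"
proof -
  define r where "r = norm u"
  have r: "0 \<le> r" "r < 1" "\<bar>Re u\<bar> \<le> r" using assms abs_Re_le_cmod unfolding r_def by auto
  have norm_sq: "(1 + Re u)\<^sup>2 + (Im u)\<^sup>2 = 1 + 2 * Re u + r\<^sup>2"
    unfolding r_def cmod_power2 by (simp add: power2_eq_square algebra_simps)
  have "0 \<le> (1 - r) * (r - Re u)" using r by (intro mult_nonneg_nonneg) auto
  then have "(1 + Re u)\<^sup>2 + (Im u)\<^sup>2 \<le> (1 + Re u) * (1 + r)"
    unfolding norm_sq by (simp add: power2_eq_square algebra_simps)
  moreover have "0 < (1 + Re u)\<^sup>2 + (Im u)\<^sup>2" using r by (simp add: add_pos_nonneg)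
  ultimately have "1 / (1 + r) \<le> (1 + Re u) / ((1 + Re u)\<^sup>2 + (Im u)\<^sup>2)"
    using r by (simp add: divide_simps mult.commute)
  then show ?thesis unfolding r_def by (simp add: Re_divide)
qed

lemma tail_div_head_norm_less:
  fixes b :: "nat \<Rightarrow> 'a :: {banach, real_normed_field}"
  assumes summable: "summable (\<lambda>k. norm (b k))"
    and less: "(\<Sum>k. norm (b k)) < D" and "D \<le> 1"
  shows "1 + (\<Sum>k<m. b k) \<noteq> 0"
    and "norm ((\<Sum>k. b (k + m)) / (1 + (\<Sum>k<m. b k))) < D"
proof -
  define H where "H = (\<Sum>k<m. norm (b k))"
  define T where "T = (\<Sum>k. norm (b (k + m)))"
  have tail_summable: "summable (\<lambda>k. norm (b (k + m)))"
    using summable_ignore_initial_segment[OF summable] .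
  have HT: "H + T < D"
    using less suminf_split_initial_segment[OF summable, of m] unfolding H_def T_def by simp
  have H: "0 \<le> H" and T: "0 \<le> T"
    unfolding H_def T_def using tail_summable by (auto intro: sum_nonneg suminf_nonneg)
  have "1 - H \<le> norm (1 + (\<Sum>k<m. b k))"
    using norm_diff_ineq[of 1 "\<Sum>k<m. b k"] norm_sum[of b "{..<m}"] unfolding H_def by simp
  moreover have "H < 1" using HT T \<open>D \<le> 1\<close> by simp
  ultimately have head: "0 < 1 - H" "1 - H \<le> norm (1 + (\<Sum>k<m. b k))" by auto
  then show "1 + (\<Sum>k<m. b k) \<noteq> 0" by auto
  have "norm ((\<Sum>k. b (k + m)) / (1 + (\<Sum>k<m. b k))) \<le> T / (1 - H)"
    unfolding norm_divide T_def using head summable_norm[OF tail_summable] T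
    by (intro frac_le) (auto simp: T_def)
  also have "\<dots> < D"
  proof -
    have "T < D * (1 - H)" using HT mult_right_mono[OF \<open>D \<le> 1\<close> H] by (simp add: algebra_simps)
    then show ?thesis using head by (simp add: divide_simps)
  qed
  finally show "norm ((\<Sum>k. b (k + m)) / (1 + (\<Sum>k<m. b k))) < D" .
qed

lemma Re_quotients_by_partial_sum_ge:
  fixes b :: "nat \<Rightarrow> complex"
  assumes summable: "summable (\<lambda>k. norm (b k))"
    and less: "(\<Sum>k. norm (b k)) < D" and "D \<le> 1"
  shows "1 - D \<le> Re ((1 + suminf b) / (1 + (\<Sum>k<m. b k)))"
    and "1 / (1 + D) \<le> Re ((1 + (\<Sum>k<m. b k)) / (1 + suminf b))"
proof -
  define head where "head = 1 + (\<Sum>k<m. b k)"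
  define u where "u = (\<Sum>k. b (k + m)) / head"
  have head: "head \<noteq> 0" and u: "norm u < D"
    using tail_div_head_norm_less[OF assms, of m] unfolding head_def u_def by auto
  have "1 + suminf b = head * (1 + u)"
    using suminf_split_initial_segment[OF summable_norm_cancel[OF summable], of m] head
    unfolding head_def u_def by (simp add: field_simps)
  then have quotient: "(1 + suminf b) / head = 1 + u" "head / (1 + suminf b) = 1 / (1 + u)"
    using head by simp_all
  have "1 - D \<le> 1 - norm u" using u by simp
  also have "\<dots> \<le> Re (1 + u)" using abs_Re_le_cmod[of u] by simp
  finally show "1 - D \<le> Re ((1 + suminf b) / (1 + (\<Sum>k<m. b k)))"
    using quotient unfolding head_def by simp
  have "1 / (1 + D) \<le> 1 / (1 + norm u)"
    using u norm_ge_zero[of u] by (intro divide_left_mono mult_pos_pos) linarith+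
  also have "\<dots> \<le> Re (1 / (1 + u))"
    using u \<open>D \<le> 1\<close> by (intro Re_inverse_one_plus_ge) simp
  finally show "1 / (1 + D) \<le> Re ((1 + (\<Sum>k<m. b k)) / (1 + suminf b))"
    using quotient unfolding head_def by simp
qed

lemma dini_numerator_le:
  fixes x \<alpha> :: real
  assumes "x > 1/8" and "\<alpha> \<ge> 0"
  shows "(2 * real (Suc k) + \<alpha>) * 2 ^ Suc k * x ^ Suc k
           \<le> (32 * x + 2 * \<alpha>) * fact (Suc k) * pochhammer x (Suc k)"
proof -
  define F where "F = (fact (Suc k) :: real)"
  define P where "P = pochhammer x (Suc k)"
  have F: "2 ^ k \<le> F" and F0: "0 \<le> F"
    unfolding F_def using two_power_le_fact_Suc by auto
  have P_Suc: "x ^ Suc k \<le> P" unfolding P_def using assms by (intro power_le_pochhammer) auto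
  have P_split: "x ^ k * (x + real k) \<le> P"
    unfolding P_def pochhammer_Suc using assms
    by (intro mult_right_mono power_le_pochhammer) auto
  have "\<alpha> * (2 ^ Suc k * x ^ Suc k) \<le> \<alpha> * (2 * F * P)"
    using F P_Suc F0 assms by (intro mult_left_mono mult_mono) auto
  moreover have "2 * real (Suc k) * 2 ^ Suc k * x ^ Suc k \<le> 32 * x * F * P"
  proof -
    have "2 * real (Suc k) * 2 ^ Suc k * x ^ Suc k = x * (4 * real (Suc k)) * (2 ^ k * x ^ k)"
      by simp
    also have "\<dots> \<le> x * (32 * (x + real k)) * (2 ^ k * x ^ k)"
      using assms by (intro mult_right_mono mult_left_mono) auto
    also have "\<dots> = 32 * x * 2 ^ k * (x ^ k * (x + real k))" by simp
    also have "\<dots> \<le> 32 * x * F * P"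
      using F F0 P_split assms by (intro mult_mono mult_left_mono) auto
    finally show ?thesis .
  qed
  ultimately show ?thesis unfolding F_def P_def by (simp add: algebra_simps)
qed

lemma dini_coeff_Suc_abs_le:
  assumes "\<alpha> > 0" and "v > -7/8"
  shows "\<bar>dini_coeff \<alpha> v (Suc k)\<bar> \<le> (32 * (v + 1) + 2 * \<alpha>) / \<alpha> * (1 / (8 * (v + 1))) ^ Suc k"
proof -
  define x where "x = v + 1"
  define n where "n = Suc k"
  have x: "x > 1/8" using assms unfolding x_def by simp
  have P: "pochhammer x n > 0" using x by (intro pochhammer_pos) auto
  have "\<bar>dini_coeff \<alpha> v n\<bar> = (2 * real n + \<alpha>) / (\<alpha> * 4 ^ n * fact n * pochhammer x n)"
    using assms P unfolding dini_coeff_def x_def by (simp add: abs_mult)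
  also have "\<dots> = (2 * real n + \<alpha>) / (fact n * pochhammer x n) / (\<alpha> * 4 ^ n)"
    by simp
  also have "\<dots> \<le> (32 * x + 2 * \<alpha>) / (2 ^ n * x ^ n) / (\<alpha> * 4 ^ n)"
  proof (rule divide_right_mono)
    have "(2 * real n + \<alpha>) * (2 ^ n * x ^ n) \<le> (32 * x + 2 * \<alpha>) * (fact n * pochhammer x n)"
      using dini_numerator_le[OF x, of \<alpha> k] assms unfolding n_def by (simp add: mult.assoc)
    then show "(2 * real n + \<alpha>) / (fact n * pochhammer x n) \<le> (32 * x + 2 * \<alpha>) / (2 ^ n * x ^ n)"
      using P x by (simp add: divide_simps)
  qed (use assms in simp)
  also have "\<dots> = (32 * x + 2 * \<alpha>) / \<alpha> * (1 / (8 * x)) ^ n"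
  proof -
    have "(8::real) ^ n = 2 ^ n * 4 ^ n" by (simp flip: power_mult_distrib)
    then show ?thesis using assms x by (simp add: power_divide power_mult_distrib)
  qed
  finally show ?thesis unfolding x_def n_def .
qed

lemma dini_coeff_abs_summable_le:
  assumes "\<alpha> > 0" and "v > -7/8"
  shows "summable (\<lambda>k. \<bar>dini_coeff \<alpha> v (Suc k)\<bar>)"
    and "(\<Sum>k. \<bar>dini_coeff \<alpha> v (Suc k)\<bar>) \<le> (32 * v + 2 * \<alpha> + 32) / ((8 * v + 7) * \<alpha>)"
proof -
  define K where "K = (32 * (v + 1) + 2 * \<alpha>) / \<alpha>"
  define q where "q = 1 / (8 * (v + 1))"
  have q: "0 < q" "q < 1" using assms unfolding q_def by (auto simp: field_simps)
  have geometric: "(\<lambda>k. K * q ^ Suc k) sums (K * q / (1 - q))"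
    using sums_mult[OF geometric_sums[of q], of "K * q"] q by (simp add: mult.assoc)
  have bound: "\<bar>dini_coeff \<alpha> v (Suc k)\<bar> \<le> K * q ^ Suc k" for k
    using dini_coeff_Suc_abs_le[OF assms] unfolding K_def q_def .
  show summable: "summable (\<lambda>k. \<bar>dini_coeff \<alpha> v (Suc k)\<bar>)"
    using bound by (intro summable_comparison_test'[OF sums_summable[OF geometric]]) auto
  have "(\<Sum>k. \<bar>dini_coeff \<alpha> v (Suc k)\<bar>) \<le> K * q / (1 - q)"
    using suminf_le[OF bound summable sums_summable[OF geometric]] sums_unique[OF geometric]
    by simp
  also have "\<dots> = (32 * v + 2 * \<alpha> + 32) / ((8 * v + 7) * \<alpha>)"
  proof -
    have "v + 1 > 0" "8 * v + 7 > 0" using assms by auto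
    then have "K * q / (1 - q) = K / (8 * v + 7)"
      unfolding q_def by (simp add: divide_simps)
    then show ?thesis unfolding K_def by (simp add: algebra_simps)
  qed
  finally show "(\<Sum>k. \<bar>dini_coeff \<alpha> v (Suc k)\<bar>) \<le> (32 * v + 2 * \<alpha> + 32) / ((8 * v + 7) * \<alpha>)" .
qed

definition dini_term :: "real \<Rightarrow> real \<Rightarrow> complex \<Rightarrow> nat \<Rightarrow> complex" where
  "dini_term \<alpha> v z k = complex_of_real (dini_coeff \<alpha> v (Suc k)) * z ^ Suc k"

lemma dini_w_eq:
  assumes "summable (dini_term \<alpha> v z)"
  shows "dini_w \<alpha> v z = z * (1 + suminf (dini_term \<alpha> v z))"
  using suminf_mult[OF assms, of z] unfolding dini_w_def dini_term_def
  by (simp add: algebra_simps)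

lemma dini_w_partial_eq: "dini_w_partial \<alpha> v m z = z * (1 + (\<Sum>k<m. dini_term \<alpha> v z k))"
  unfolding dini_w_partial_def dini_term_def sum_bounds_lt_plus1[symmetric]
  by (simp add: algebra_simps sum_distrib_left)

lemma dini_term_norm_summable_less:
  assumes "\<alpha> > 0" and "v > -7/8" and "norm z < 1"
  shows "summable (\<lambda>k. norm (dini_term \<alpha> v z k))"
    and "(\<Sum>k. norm (dini_term \<alpha> v z k)) < (32 * v + 2 * \<alpha> + 32) / ((8 * v + 7) * \<alpha>)"
proof -
  define D where "D = (32 * v + 2 * \<alpha> + 32) / ((8 * v + 7) * \<alpha>)"
  define A where "A k = \<bar>dini_coeff \<alpha> v (Suc k)\<bar>" for k
  have A: "summable A" "suminf A \<le> D"
    using dini_coeff_abs_summable_le[OF assms(1,2)] unfolding A_def D_def by auto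
  have "D > 0" unfolding D_def using assms by (intro divide_pos_pos) auto
  have norm_term: "norm (dini_term \<alpha> v z k) \<le> norm z * A k" for k
  proof -
    have "norm z ^ Suc k \<le> norm z" using assms(3) by (simp add: power_le_one mult_left_le)
    then show ?thesis
      unfolding dini_term_def A_def norm_mult norm_power
      by (simp add: mult_right_mono mult.commute[of _ "norm z ^ Suc k"] del: power_Suc)
  qed
  show summable: "summable (\<lambda>k. norm (dini_term \<alpha> v z k))"
    using norm_term by (intro summable_comparison_test'[OF summable_mult[OF A(1)]]) auto
  have "(\<Sum>k. norm (dini_term \<alpha> v z k)) \<le> (\<Sum>k. norm z * A k)"
    using norm_term summable summable_mult[OF A(1)] by (rule suminf_le)
  also have "\<dots> = norm z * suminf A" using suminf_mult[OF A(1)] .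
  also have "\<dots> \<le> norm z * D" using A(2) by (simp add: mult_left_mono)
  also have "\<dots> < D" using assms(3) \<open>D > 0\<close> by simp
  finally show "(\<Sum>k. norm (dini_term \<alpha> v z k)) < D" unfolding D_def .
qed

theorem theorem2p1:
  fixes \<alpha> v :: real and m :: nat and z :: complex
  assumes "\<alpha> > 0" and "v > -7/8"
    and "8 * (\<alpha> - 4) * v + 5 * \<alpha> - 32 \<ge> 0"
    and "norm z < 1"
  shows "(Re (analytic_quot (dini_w \<alpha> v) (dini_w_partial \<alpha> v m) z)
           \<ge> (8 * (\<alpha> - 4) * v + 5 * \<alpha> - 32) / ((8 * v + 7) * \<alpha>)) \<and>
         (Re (analytic_quot (dini_w_partial \<alpha> v m) (dini_w \<alpha> v) z)
           \<ge> (8 * v + 7) * \<alpha> / ((8 * v + 7) * \<alpha> + 32 * v + 2 * \<alpha> + 32))"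
proof -
  define D where "D = (32 * v + 2 * \<alpha> + 32) / ((8 * v + 7) * \<alpha>)"
  have denom: "(8 * v + 7) * \<alpha> > 0" using assms(1,2) by simp
  have "32 * v + 2 * \<alpha> + 32 \<le> (8 * v + 7) * \<alpha>" using assms(3) by (simp add: algebra_simps)
  then have D: "0 < D" "D \<le> 1"
    unfolding D_def using assms(1,2) denom by (auto simp: divide_simps)
  have lower_bounds:
    "(8 * (\<alpha> - 4) * v + 5 * \<alpha> - 32) / ((8 * v + 7) * \<alpha>) = 1 - D"
    "(8 * v + 7) * \<alpha> / ((8 * v + 7) * \<alpha> + 32 * v + 2 * \<alpha> + 32) = 1 / (1 + D)"
    unfolding D_def using denom by (simp_all add: divide_simps algebra_simps)
  show ?thesis
  proof (cases "z = 0")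
    case True
    with D show ?thesis unfolding analytic_quot_def lower_bounds by simp
  next
    case False
    have summable: "summable (\<lambda>k. norm (dini_term \<alpha> v z k))"
      and less: "(\<Sum>k. norm (dini_term \<alpha> v z k)) < D"
      using dini_term_norm_summable_less[OF assms(1,2,4)] unfolding D_def by auto
    show ?thesis
      using Re_quotients_by_partial_sum_ge[OF summable less \<open>D \<le> 1\<close>, of m] False
      unfolding analytic_quot_def dini_w_eq[OF summable_norm_cancel[OF summable]]
        dini_w_partial_eq lower_bounds
      by simp
  qed
qed

end
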